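(* Let $\Phi$ be a finite crystallographic root system and let $\Psi,\Psi'\subseteq\Phi^+$ be such that $\operatorname{ord}(\beta,\gamma)=2$ for all $\beta\in\Psi$ and $\gamma\in\Psi'$. Then the families of random variables $\{\mathcal{X}_\beta\}_{\beta\in\Psi}$ and $\{\mathcal{X}_\gamma\}_{\gamma\in\Psi'}$ are independent.
   Context: $\Phi$ is a finite crystallographic root system with positive roots $\Phi^+$ and Weyl group $W$; $s_\beta$ is the reflection in $\beta$ and $\operatorname{ord}(\beta,\gamma)=\min\{k>0:(s_\beta s_\gamma)^k=e\}$ (so $\operatorname{ord}(\beta,\gamma)=2$ means $\beta\ne\gamma$ are orthogonal). For $\beta\in\Phi^+$, $\mathcal{X}_\beta$ is the Bernoulli random variable on $W$ with the uniform distribution, $\mathcal{X}_\beta(w)=1$ if $w(\beta)\in-\Phi^+$ and $0$ otherwise. *)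

theory Defs
  imports "HOL-Probability.Probability"
begin

definition refl_vec :: "'a::euclidean_space \<Rightarrow> 'a \<Rightarrow> 'a" where
  "refl_vec a x = x - (2 * (x \<bullet> a) / (a \<bullet> a)) *\<^sub>R a"

definition crystallographic_root_system :: "'a::euclidean_space set \<Rightarrow> bool" where
  "crystallographic_root_system R \<longleftrightarrow>
     finite R \<and> 0 \<notin> R \<and> span R = UNIV \<and>
     (\<forall>a\<in>R. refl_vec a ` R \<subseteq> R) \<and>
     (\<forall>a\<in>R. \<forall>b\<in>R. 2 * (b \<bullet> a) / (a \<bullet> a) \<in> \<int>) \<and>
     (\<forall>a\<in>R. \<forall>c::real. c *\<^sub>R a \<in> R \<longrightarrow> c = 1 \<or> c = -1)"

definition positive_system :: "'a::euclidean_space set \<Rightarrow> 'a set \<Rightarrow> bool" where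
  "positive_system R P \<longleftrightarrow>
     (\<exists>v. (\<forall>a\<in>R. v \<bullet> a \<noteq> 0) \<and> P = {a\<in>R. v \<bullet> a > 0})"

inductive_set weyl_group :: "'a::euclidean_space set \<Rightarrow> ('a \<Rightarrow> 'a) set" for R where
  weyl_id: "id \<in> weyl_group R"
| weyl_step: "w \<in> weyl_group R \<Longrightarrow> a \<in> R \<Longrightarrow> refl_vec a \<circ> w \<in> weyl_group R"

definition ord_refl :: "'a::euclidean_space \<Rightarrow> 'a \<Rightarrow> nat" where
  "ord_refl b g = (LEAST k. k > 0 \<and> (refl_vec b \<circ> refl_vec g) ^^ k = id)"

definition weyl_uniform :: "'a::euclidean_space set \<Rightarrow> ('a \<Rightarrow> 'a) measure" where
  "weyl_uniform R = measure_pmf (pmf_of_set (weyl_group R))"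

definition X_rv :: "'a::euclidean_space set \<Rightarrow> 'a \<Rightarrow> ('a \<Rightarrow> 'a) \<Rightarrow> real" where
  "X_rv P b w = (if w b \<in> uminus ` P then 1 else 0)"

end

(* Order 2 forces every root of Psi' to be orthogonal to every root of Psi: commuting reflections in
   non-orthogonal roots are reflections in parallel roots, hence equal.  So Psi' lies in the set D of
   roots orthogonal to Psi, whose Weyl group U fixes Psi pointwise; thus (X_b) for b in Psi is constant
   on every coset wU.  On such a coset, X_g(wu) for g in Psi' is the sign of u g against w^-1 v, so it
   only depends on the chamber of w^-1 v with respect to D.  U acts transitively on these chambers,
   hence (X_g) for g in Psi' has the same distribution on every coset, which gives independence. *)

theory Submission
  imports Defs
begin

lemma linear_refl_vec: "linear (refl_vec a)"
  by (rule linearI) (auto simp: refl_vec_def algebra_simps add_divide_distrib)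

lemma refl_vec_inner: "refl_vec a x \<bullet> refl_vec a y = x \<bullet> y"
  by (cases "a \<bullet> a = 0")
     (simp_all add: refl_vec_def inner_diff_left inner_diff_right inner_commute field_simps)

lemma refl_vec_refl_vec [simp]: "refl_vec a (refl_vec a x) = x"
  by (cases "a \<bullet> a = 0") (simp_all add: refl_vec_def algebra_simps)

lemma bij_refl_vec: "bij (refl_vec a)"
  by (rule o_bij[of "refl_vec a"]) (auto simp: fun_eq_iff)

lemma refl_vec_orthogonal: "x \<bullet> a = 0 \<Longrightarrow> refl_vec a x = x"
  by (simp add: refl_vec_def)

lemma refl_vec_self: "a \<noteq> 0 \<Longrightarrow> refl_vec a a = - a"
  by (simp add: refl_vec_def scaleR_2)

lemma refl_vec_scaleR: "c \<noteq> 0 \<Longrightarrow> refl_vec (c *\<^sub>R a) = refl_vec a"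
  by (auto simp: fun_eq_iff refl_vec_def power2_eq_square field_simps)

lemma commuting_refl_vec_parallel:
  assumes "refl_vec b \<circ> refl_vec g = refl_vec g \<circ> refl_vec b" "g \<noteq> 0" and bg: "b \<bullet> g \<noteq> 0"
  shows "\<exists>c. b = c *\<^sub>R g"
proof -
  define y where "y = refl_vec b g"
  define k where "k = 2 * (g \<bullet> b) / (b \<bullet> b)"
  have "refl_vec g y = - y"
    using fun_cong[OF assms(1), of g] by (simp add: y_def refl_vec_self[OF assms(2)] linear_neg[OF linear_refl_vec])
  then have "2 *\<^sub>R y = 2 *\<^sub>R (((y \<bullet> g) / (g \<bullet> g)) *\<^sub>R g)"
    by (simp add: refl_vec_def algebra_simps scaleR_2)
  then have "y = ((y \<bullet> g) / (g \<bullet> g)) *\<^sub>R g"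
    by (simp only: scaleR_cancel_left) simp
  moreover have "k *\<^sub>R b = g - y"
    by (simp add: y_def k_def refl_vec_def)
  ultimately have "k *\<^sub>R b = (1 - (y \<bullet> g) / (g \<bullet> g)) *\<^sub>R g"
    by (simp add: algebra_simps)
  moreover have "k \<noteq> 0"
    using bg by (auto simp: k_def inner_commute)
  ultimately have "b = ((1 - (y \<bullet> g) / (g \<bullet> g)) / k) *\<^sub>R g"
    by (metis scaleR_scaleR divide_inverse_commute left_inverse scaleR_one)
  then show ?thesis ..
qed

lemma refl_vec_root: "crystallographic_root_system R \<Longrightarrow> a \<in> R \<Longrightarrow> x \<in> R \<Longrightarrow> refl_vec a x \<in> R"
  unfolding crystallographic_root_system_def by blast

lemma uminus_root: "crystallographic_root_system R \<Longrightarrow> a \<in> R \<Longrightarrow> - a \<in> R"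
  by (metis refl_vec_root refl_vec_self crystallographic_root_system_def)

lemma weyl_group_comp: "w \<in> weyl_group R \<Longrightarrow> w' \<in> weyl_group R \<Longrightarrow> w \<circ> w' \<in> weyl_group R"
  by (induction rule: weyl_group.induct) (auto simp: comp_assoc intro: weyl_group.intros)

lemma weyl_group_funpow: "t \<in> weyl_group R \<Longrightarrow> t ^^ n \<in> weyl_group R"
  by (induction n) (auto intro: weyl_group_comp weyl_group.weyl_id)

lemma weyl_group_mono:
  assumes "R \<subseteq> R'"
  shows "weyl_group R \<subseteq> weyl_group R'"
proof
  fix w assume "w \<in> weyl_group R"
  then show "w \<in> weyl_group R'"
    by induction (use assms in \<open>blast intro: weyl_group.intros\<close>)+
qed

lemma linear_weyl_group: "w \<in> weyl_group R \<Longrightarrow> linear w"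
  by (induction rule: weyl_group.induct) (blast intro: linear_id linear_compose linear_refl_vec)+

lemma bij_weyl_group: "w \<in> weyl_group R \<Longrightarrow> bij w"
  by (induction rule: weyl_group.induct) (blast intro: bij_id bij_comp bij_refl_vec)+

lemma weyl_group_inner: "w \<in> weyl_group R \<Longrightarrow> w x \<bullet> w y = x \<bullet> y"
  by (induction rule: weyl_group.induct) (auto simp: refl_vec_inner)

lemma weyl_group_maps_invariant:
  assumes "\<And>a x. a \<in> R \<Longrightarrow> x \<in> S \<Longrightarrow> refl_vec a x \<in> S" "w \<in> weyl_group R" "x \<in> S"
  shows "w x \<in> S"
  using assms(2,3) by (induction arbitrary: x rule: weyl_group.induct) (auto intro: assms(1))

lemma weyl_group_root: "crystallographic_root_system R \<Longrightarrow> w \<in> weyl_group R \<Longrightarrow> x \<in> R \<Longrightarrow> w x \<in> R"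
  using weyl_group_maps_invariant[of R R] refl_vec_root by blast

lemma weyl_group_fixes_orthogonal:
  assumes "w \<in> weyl_group R" "\<And>a. a \<in> R \<Longrightarrow> x \<bullet> a = 0"
  shows "w x = x"
  using assms(1) by (induction rule: weyl_group.induct) (auto simp: refl_vec_orthogonal assms(2))

lemma finite_weyl_group:
  assumes R: "crystallographic_root_system R"
  shows "finite (weyl_group R)"
proof -
  have "inj_on (\<lambda>w. restrict w R) (weyl_group R)"
  proof (rule inj_onI)
    fix w w' assume w: "w \<in> weyl_group R" "w' \<in> weyl_group R" and "restrict w R = restrict w' R"
    then have "\<forall>x\<in>R. w x = w' x"
      by (metis restrict_apply')
    moreover have "span R = UNIV"
      using R by (simp add: crystallographic_root_system_def)
    ultimately show "w = w'"
      using linear_eq_on_span[OF linear_weyl_group[OF w(1)] linear_weyl_group[OF w(2)]] by blast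
  qed
  moreover have "(\<lambda>w. restrict w R) ` weyl_group R \<subseteq> R \<rightarrow>\<^sub>E R"
    using weyl_group_root[OF R] by auto
  moreover have "finite R"
    using R by (simp add: crystallographic_root_system_def)
  ultimately show ?thesis
    by (meson finite_PiE finite_imageD finite_subset)
qed

lemma inj_comp_left: "inj f \<Longrightarrow> inj ((\<circ>) f)"
  by (auto intro!: injI simp: fun_eq_iff inj_eq)

lemma bij_betw_weyl_group_comp_left:
  assumes "finite (weyl_group R)" "u \<in> weyl_group R"
  shows "bij_betw ((\<circ>) u) (weyl_group R) (weyl_group R)"
proof (rule bij_betw_imageI)
  show "inj_on ((\<circ>) u) (weyl_group R)"
    using inj_comp_left[OF bij_is_inj[OF bij_weyl_group[OF assms(2)]]] by (rule inj_on_subset) simp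
  then show "(\<circ>) u ` weyl_group R = weyl_group R"
    using assms by (intro endo_inj_surj) (auto intro: weyl_group_comp)
qed

lemma bij_betw_weyl_group_comp_right:
  assumes "finite (weyl_group R)" "u \<in> weyl_group R"
  shows "bij_betw (\<lambda>w. w \<circ> u) (weyl_group R) (weyl_group R)"
proof (rule bij_betw_imageI)
  show "inj_on (\<lambda>w. w \<circ> u) (weyl_group R)"
    using bij_is_surj[OF bij_weyl_group[OF assms(2)]] by (metis inj_onI surj_fun_eq)
  then show "(\<lambda>w. w \<circ> u) ` weyl_group R = weyl_group R"
    using assms by (intro endo_inj_surj) (auto intro: weyl_group_comp)
qed

lemma weyl_group_finite_order:
  assumes "finite (weyl_group R)" "t \<in> weyl_group R"
  shows "\<exists>n>0. t ^^ n = id"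
proof -
  have orbit: "((\<circ>) t ^^ n) id = t ^^ n" for n
    by (induction n) auto
  have "finite {y. \<exists>n. y = ((\<circ>) t ^^ n) id}"
    using weyl_group_funpow[OF assms(2)] by (auto simp: orbit intro: finite_subset[OF _ assms(1)])
  then obtain n where "n > 0" "((\<circ>) t ^^ n) id = id"
    using funpow_inj_finite[OF inj_comp_left[OF bij_is_inj[OF bij_weyl_group[OF assms(2)]]]] by blast
  then show ?thesis
    by (auto simp: orbit)
qed

lemma ord_refl_eq_2_imp_orthogonal:
  assumes R: "crystallographic_root_system R" and "b \<in> R" "g \<in> R" and ord: "ord_refl b g = 2"
  shows "b \<bullet> g = 0"
proof (rule ccontr)
  assume bg: "b \<bullet> g \<noteq> 0"
  have nonzero: "b \<noteq> 0" "g \<noteq> 0"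
    using R \<open>b \<in> R\<close> \<open>g \<in> R\<close> unfolding crystallographic_root_system_def by auto
  define t where "t = refl_vec b \<circ> refl_vec g"
  have "refl_vec b \<circ> (refl_vec g \<circ> id) \<in> weyl_group R"
    using \<open>b \<in> R\<close> \<open>g \<in> R\<close> by (intro weyl_group.intros)
  then have "t \<in> weyl_group R"
    unfolding t_def comp_id .
  \<comment> \<open>The LEAST in ord_refl is only meaningful because some power of t is the identity.\<close>
  then have "\<exists>k>0. t ^^ k = id"
    by (rule weyl_group_finite_order[OF finite_weyl_group[OF R]])
  then have "0 < ord_refl b g \<and> t ^^ ord_refl b g = id"
    unfolding ord_refl_def t_def[symmetric] by (rule LeastI_ex)
  then have "t \<circ> t = id"
    by (simp add: ord numeral_2_eq_2)
  have "refl_vec b (refl_vec g x) = refl_vec g (refl_vec b x)" for x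
    using fun_cong[OF \<open>t \<circ> t = id\<close>, of "refl_vec g (refl_vec b x)"] by (simp add: t_def)
  then have "refl_vec b \<circ> refl_vec g = refl_vec g \<circ> refl_vec b"
    by (simp add: fun_eq_iff)
  then obtain c where "b = c *\<^sub>R g"
    using commuting_refl_vec_parallel nonzero(2) bg by blast
  with nonzero(1) have "refl_vec b = refl_vec g"
    by (simp add: refl_vec_scaleR)
  then have "t ^^ 1 = id"
    by (simp add: t_def fun_eq_iff)
  moreover have "t ^^ 1 \<noteq> id"
    using not_less_Least[of 1 "\<lambda>k. k > 0 \<and> t ^^ k = id"] ord
    unfolding ord_refl_def t_def[symmetric] by simp
  ultimately show False
    by contradiction
qed

lemma weyl_group_chamber_transitive:
  assumes fin: "finite (weyl_group D)"
    and closed: "\<And>a x. a \<in> D \<Longrightarrow> x \<in> D \<Longrightarrow> refl_vec a x \<in> D"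
    and regular: "\<And>d. d \<in> D \<Longrightarrow> d \<bullet> y \<noteq> 0" "\<And>d. d \<in> D \<Longrightarrow> d \<bullet> z \<noteq> 0"
  shows "\<exists>u\<in>weyl_group D. \<forall>d\<in>D. d \<bullet> z < 0 \<longleftrightarrow> u d \<bullet> y < 0"
proof -
  \<comment> \<open>Take u maximising u z \<bullet> y: at a root u d of the wrong sign, reflecting in u d would increase it.\<close>
  define G where "G u = u z \<bullet> y" for u :: "'a \<Rightarrow> 'a"
  obtain u where u: "u \<in> weyl_group D" "G u = Max (G ` weyl_group D)"
    using Max_in[of "G ` weyl_group D"] fin weyl_group.weyl_id by fastforce
  have max: "G u' \<le> G u" if "u' \<in> weyl_group D" for u'
    using that fin u(2) by simp
  have "d \<bullet> z < 0 \<longleftrightarrow> u d \<bullet> y < 0" if d: "d \<in> D" for d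
  proof (rule ccontr)
    assume sign_differs: "\<not> (d \<bullet> z < 0 \<longleftrightarrow> u d \<bullet> y < 0)"
    define e where "e = u d"
    have "e \<in> D"
      unfolding e_def using weyl_group_maps_invariant[OF closed u(1) d] .
    then have "d \<bullet> z \<noteq> 0" "e \<bullet> y \<noteq> 0"
      using regular d by auto
    then have "(d \<bullet> z) * (e \<bullet> y) < 0" "e \<bullet> e > 0"
      using sign_differs by (auto simp: e_def mult_less_0_iff)
    then have "2 / (e \<bullet> e) * ((d \<bullet> z) * (e \<bullet> y)) < 0"
      by (simp add: divide_neg_pos)
    moreover have "G (refl_vec e \<circ> u) = G u - 2 / (e \<bullet> e) * ((d \<bullet> z) * (e \<bullet> y))"
      using weyl_group_inner[OF u(1), of z d]
      by (simp add: G_def e_def refl_vec_def inner_diff_right inner_commute)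
    moreover have "G (refl_vec e \<circ> u) \<le> G u"
      using \<open>e \<in> D\<close> u(1) by (intro max weyl_group.weyl_step)
    ultimately show False
      by linarith
  qed
  with u(1) show ?thesis
    by blast
qed

lemma card_filter_eq_sum_of_bool: "finite A \<Longrightarrow> card {x\<in>A. P x} = (\<Sum>x\<in>A. of_bool (P x))"
  by (simp add: Int_def)

lemma card_filter_bij_betw: "bij_betw h A A \<Longrightarrow> card {x\<in>A. P (h x)} = card {x\<in>A. P x}"
  by (rule bij_betw_same_card[of h]) (auto simp: bij_betw_def inj_on_def)

lemma card_indep_if_coset_equidistributed:
  fixes m :: "'w \<Rightarrow> 'u \<Rightarrow> 'w"
  assumes fin: "finite W" "finite U" "U \<noteq> {}"
    and translate: "\<And>u. u \<in> U \<Longrightarrow> bij_betw (\<lambda>w. m w u) W W"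
    and f_invariant: "\<And>w u. w \<in> W \<Longrightarrow> u \<in> U \<Longrightarrow> f (m w u) = f w"
    and g_equidistributed:
      "\<And>w w'. w \<in> W \<Longrightarrow> w' \<in> W \<Longrightarrow> card {u\<in>U. g (m w u) \<in> B} = card {u\<in>U. g (m w' u) \<in> B}"
  shows "card W * card {w\<in>W. f w \<in> A \<and> g w \<in> B} = card {w\<in>W. f w \<in> A} * card {w\<in>W. g w \<in> B}"
proof (cases "W = {}")
  case False
  then obtain w0 where "w0 \<in> W"
    by blast
  define c where "c = card {u\<in>U. g (m w0 u) \<in> B}"
  have count: "card U * card {w\<in>W. f w \<in> A' \<and> g w \<in> B} = card {w\<in>W. f w \<in> A'} * c" for A'
  proof -
    have "card U * card {w\<in>W. f w \<in> A' \<and> g w \<in> B}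
        = (\<Sum>u\<in>U. card {w\<in>W. f (m w u) \<in> A' \<and> g (m w u) \<in> B})"
      using card_filter_bij_betw[OF translate, of _ "\<lambda>y. f y \<in> A' \<and> g y \<in> B"] by simp
    also have "\<dots> = (\<Sum>u\<in>U. \<Sum>w\<in>W. of_bool (f w \<in> A') * of_bool (g (m w u) \<in> B))"
      using fin by (intro sum.cong refl)
        (simp del: sum_of_bool_eq add: card_filter_eq_sum_of_bool f_invariant of_bool_conj)
    also have "\<dots> = (\<Sum>w\<in>W. of_bool (f w \<in> A') * card {u\<in>U. g (m w u) \<in> B})"
      using fin by (subst sum.swap)
        (simp del: sum_of_bool_eq add: card_filter_eq_sum_of_bool sum_distrib_left)
    also have "\<dots> = (\<Sum>w\<in>W. of_bool (f w \<in> A') * c)"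
      using g_equidistributed[OF _ \<open>w0 \<in> W\<close>] by (simp add: c_def)
    also have "\<dots> = card {w\<in>W. f w \<in> A'} * c"
      using fin by (simp del: sum_of_bool_eq add: card_filter_eq_sum_of_bool sum_distrib_right)
    finally show ?thesis .
  qed
  have "card U * (card W * card {w\<in>W. f w \<in> A \<and> g w \<in> B})
      = card W * (card {w\<in>W. f w \<in> A} * c)"
    by (simp only: mult.left_commute[of "card U"] count)
  also have "\<dots> = card {w\<in>W. f w \<in> A} * (card U * card {w\<in>W. g w \<in> B})"
    using count[of UNIV] by simp
  finally show ?thesis
    using fin by (simp add: mult.left_commute)
qed simp

lemma indep_var_pmf_of_setI:
  assumes fin: "finite W" "W \<noteq> {}"
    and range: "\<And>w. f w \<in> space M" "\<And>w. g w \<in> space N"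
    and card_indep: "\<And>A B. card W * card {w\<in>W. f w \<in> A \<and> g w \<in> B}
                          = card {w\<in>W. f w \<in> A} * card {w\<in>W. g w \<in> B}"
  shows "prob_space.indep_var (measure_pmf (pmf_of_set W)) M f N g"
proof -
  let ?P = "measure_pmf (pmf_of_set W)"
  let ?F = "{f -` A \<inter> space ?P |A. A \<in> sets M}" and ?G = "{g -` B \<inter> space ?P |B. B \<in> sets N}"
  have P: "prob_space ?P"
    by (rule prob_space_measure_pmf)
  have prob: "measure ?P S = card (W \<inter> S) / card W" for S
    using measure_pmf_of_set[OF fin(2,1)] .
  have "prob_space.indep_set ?P ?F ?G"
    unfolding prob_space.indep_sets2_eq[OF P]
  proof (intro conjI ballI)
    fix a b
    assume "a \<in> ?F" "b \<in> ?G"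
    then obtain A B where "a = f -` A" "b = g -` B"
      by auto
    moreover have "W \<inter> (f -` A \<inter> g -` B) = {w\<in>W. f w \<in> A \<and> g w \<in> B}"
      "W \<inter> f -` A = {w\<in>W. f w \<in> A}" "W \<inter> g -` B = {w\<in>W. g w \<in> B}"
      by auto
    moreover have "real (card W) > 0"
      using fin by (simp add: card_gt_0_iff)
    ultimately show "measure ?P (a \<inter> b) = measure ?P a * measure ?P b"
      using arg_cong[OF card_indep[of A B], of real] by (simp add: prob field_simps)
  qed auto
  moreover have "(\<lambda>i. {case_bool f g i -` A \<inter> space ?P |A. A \<in> sets (case_bool M N i)}) = case_bool ?F ?G"
    by (rule ext) (simp split: bool.split)
  ultimately show ?thesis
    unfolding prob_space.indep_var_def[OF P] prob_space.indep_vars_def2[OF P] prob_space.indep_set_def[OF P]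
    using range by (simp split: bool.split)
qed

lemma X_rv_eq_sign:
  assumes R: "crystallographic_root_system R" and v: "\<forall>a\<in>R. v \<bullet> a \<noteq> 0" and P: "P = {a\<in>R. v \<bullet> a > 0}"
    and "w \<in> weyl_group R" "x \<in> R"
  shows "X_rv P x w = of_bool (v \<bullet> w x < 0)"
proof -
  have "w x \<in> R"
    using R assms(4,5) by (rule weyl_group_root)
  then have "- w x \<in> P \<longleftrightarrow> v \<bullet> w x < 0"
    using uminus_root[OF R] v by (auto simp: P)
  moreover have "w x \<in> uminus ` P \<longleftrightarrow> - w x \<in> P"
    by force
  ultimately show ?thesis
    by (simp add: X_rv_def)
qed

definition orthogonal_roots :: "'a::real_inner set \<Rightarrow> 'a set \<Rightarrow> 'a set" where
  "orthogonal_roots R S = {d\<in>R. \<forall>b\<in>S. d \<bullet> b = 0}"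

lemma orthogonal_roots_refl_vec:
  assumes "crystallographic_root_system R" "a \<in> orthogonal_roots R S" "x \<in> orthogonal_roots R S"
  shows "refl_vec a x \<in> orthogonal_roots R S"
  using assms refl_vec_root[OF assms(1)]
  by (auto simp: orthogonal_roots_def refl_vec_def inner_diff_left)

lemma weyl_coset_equidistributed:
  assumes R: "crystallographic_root_system R" and v: "\<forall>a\<in>R. v \<bullet> a \<noteq> 0" and P: "P = {a\<in>R. v \<bullet> a > 0}"
    and D: "D \<subseteq> R" and closed: "\<And>a x. a \<in> D \<Longrightarrow> x \<in> D \<Longrightarrow> refl_vec a x \<in> D"
    and "\<Psi>' \<subseteq> D" and w: "w \<in> weyl_group R" "w' \<in> weyl_group R"
  shows "card {u\<in>weyl_group D. (\<lambda>g\<in>\<Psi>'. X_rv P g (w' \<circ> u)) \<in> B}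
       = card {u\<in>weyl_group D. (\<lambda>g\<in>\<Psi>'. X_rv P g (w \<circ> u)) \<in> B}"
proof -
  have U: "weyl_group D \<subseteq> weyl_group R"
    using D by (rule weyl_group_mono)
  then have fin: "finite (weyl_group D)"
    using finite_weyl_group[OF R] by (rule finite_subset)
  have adjoint: "x \<bullet> adjoint w v = v \<bullet> w x" "x \<bullet> adjoint w' v = v \<bullet> w' x" for x
    using adjoint_works[OF linear_weyl_group[OF w(1)]] adjoint_works[OF linear_weyl_group[OF w(2)]]
    by (simp_all add: inner_commute)
  have regular: "d \<bullet> adjoint w v \<noteq> 0" "d \<bullet> adjoint w' v \<noteq> 0" if "d \<in> D" for d
    using that D v weyl_group_root[OF R] by (auto simp: adjoint w)
  obtain u0 where u0: "u0 \<in> weyl_group D"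
    and sign: "\<And>d. d \<in> D \<Longrightarrow> d \<bullet> adjoint w' v < 0 \<longleftrightarrow> u0 d \<bullet> adjoint w v < 0"
    using weyl_group_chamber_transitive[OF fin closed regular] by blast
  have "(\<lambda>g\<in>\<Psi>'. X_rv P g (w' \<circ> u)) = (\<lambda>g\<in>\<Psi>'. X_rv P g (w \<circ> (u0 \<circ> u)))" if u: "u \<in> weyl_group D" for u
  proof (rule restrict_ext)
    fix g assume "g \<in> \<Psi>'"
    then have "u g \<in> D" "g \<in> R"
      using weyl_group_maps_invariant[OF closed u] \<open>\<Psi>' \<subseteq> D\<close> D by auto
    moreover have "w' \<circ> u \<in> weyl_group R" "w \<circ> (u0 \<circ> u) \<in> weyl_group R"
      using u u0 U w by (auto intro: weyl_group_comp)
    ultimately show "X_rv P g (w' \<circ> u) = X_rv P g (w \<circ> (u0 \<circ> u))"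
      using sign by (simp add: X_rv_eq_sign[OF R v P] adjoint)
  qed
  then have "card {u\<in>weyl_group D. (\<lambda>g\<in>\<Psi>'. X_rv P g (w' \<circ> u)) \<in> B}
      = card {u\<in>weyl_group D. (\<lambda>g\<in>\<Psi>'. X_rv P g (w \<circ> (u0 \<circ> u))) \<in> B}"
    by (intro arg_cong[where f = card]) auto
  also have "\<dots> = card {u\<in>weyl_group D. (\<lambda>g\<in>\<Psi>'. X_rv P g (w \<circ> u)) \<in> B}"
    by (rule card_filter_bij_betw[OF bij_betw_weyl_group_comp_left[OF fin u0]])
  finally show ?thesis .
qed

lemma card_X_rv_indep:
  assumes R: "crystallographic_root_system R" and v: "\<forall>a\<in>R. v \<bullet> a \<noteq> 0" and P: "P = {a\<in>R. v \<bullet> a > 0}"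
    and \<Psi>': "\<Psi>' \<subseteq> orthogonal_roots R \<Psi>"
  defines "W \<equiv> weyl_group R"
  shows "card W * card {w\<in>W. (\<lambda>b\<in>\<Psi>. X_rv P b w) \<in> A \<and> (\<lambda>g\<in>\<Psi>'. X_rv P g w) \<in> B}
       = card {w\<in>W. (\<lambda>b\<in>\<Psi>. X_rv P b w) \<in> A} * card {w\<in>W. (\<lambda>g\<in>\<Psi>'. X_rv P g w) \<in> B}"
proof (rule card_indep_if_coset_equidistributed[where U = "weyl_group (orthogonal_roots R \<Psi>)" and m = "(\<circ>)"])
  have D: "orthogonal_roots R \<Psi> \<subseteq> R"
    by (auto simp: orthogonal_roots_def)
  then have U: "weyl_group (orthogonal_roots R \<Psi>) \<subseteq> W"
    unfolding W_def by (rule weyl_group_mono)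
  show "finite W"
    unfolding W_def using R by (rule finite_weyl_group)
  then show "finite (weyl_group (orthogonal_roots R \<Psi>))"
    using U by (rule finite_subset[rotated])
  show "weyl_group (orthogonal_roots R \<Psi>) \<noteq> {}"
    using weyl_group.weyl_id by blast
  show "bij_betw (\<lambda>w. w \<circ> u) W W" if "u \<in> weyl_group (orthogonal_roots R \<Psi>)" for u
    using \<open>finite W\<close> that U unfolding W_def by (intro bij_betw_weyl_group_comp_right) auto
  show "(\<lambda>b\<in>\<Psi>. X_rv P b (w \<circ> u)) = (\<lambda>b\<in>\<Psi>. X_rv P b w)" if "u \<in> weyl_group (orthogonal_roots R \<Psi>)" for w u
  proof (rule restrict_ext)
    fix b assume "b \<in> \<Psi>"
    then have "u b = b"
      by (intro weyl_group_fixes_orthogonal[OF that]) (auto simp: orthogonal_roots_def inner_commute)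
    then show "X_rv P b (w \<circ> u) = X_rv P b w"
      by (simp add: X_rv_def)
  qed
  show "card {u\<in>weyl_group (orthogonal_roots R \<Psi>). (\<lambda>g\<in>\<Psi>'. X_rv P g (w \<circ> u)) \<in> B}
      = card {u\<in>weyl_group (orthogonal_roots R \<Psi>). (\<lambda>g\<in>\<Psi>'. X_rv P g (w' \<circ> u)) \<in> B}"
    if "w \<in> W" "w' \<in> W" for w w'
    using weyl_coset_equidistributed[OF R v P D orthogonal_roots_refl_vec[OF R] \<Psi>'] that
    unfolding W_def by blast
qed

theorem theorem3p4:
  fixes R P \<Psi> \<Psi>' :: "'a::euclidean_space set"
  assumes "crystallographic_root_system R"
    and "positive_system R P"
    and "\<Psi> \<subseteq> P" and "\<Psi>' \<subseteq> P"
    and "\<And>b g. b \<in> \<Psi> \<Longrightarrow> g \<in> \<Psi>' \<Longrightarrow> ord_refl b g = 2"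
  shows "prob_space.indep_var (weyl_uniform R)
           (Pi\<^sub>M \<Psi> (\<lambda>_. borel)) (\<lambda>w. \<lambda>b\<in>\<Psi>. X_rv P b w)
           (Pi\<^sub>M \<Psi>' (\<lambda>_. borel)) (\<lambda>w. \<lambda>g\<in>\<Psi>'. X_rv P g w)"
proof -
  obtain v where v: "\<forall>a\<in>R. v \<bullet> a \<noteq> 0" and P: "P = {a\<in>R. v \<bullet> a > 0}"
    using assms(2) unfolding positive_system_def by blast
  have "g \<bullet> b = 0" if "b \<in> \<Psi>" "g \<in> \<Psi>'" for b g
    unfolding inner_commute[of g] using ord_refl_eq_2_imp_orthogonal[OF assms(1)] assms(3-5) that P by blast
  then have "\<Psi>' \<subseteq> orthogonal_roots R \<Psi>"
    using assms(4) P by (auto simp: orthogonal_roots_def)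
  then show ?thesis
    unfolding weyl_uniform_def
    using finite_weyl_group[OF assms(1)] weyl_group.weyl_id[of R] card_X_rv_indep[OF assms(1) v P]
    by (intro indep_var_pmf_of_setI) (auto simp: space_PiM)
qed

end
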